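(* Let $H\in\mathbb{R}^{N\times n}$ and $Y\in\mathbb{R}^{N\times k}$ with $H^TH$ positive definite, let $c\ge 0$ be an integer, and let $R\in\mathbb{R}^{n\times n}$ be symmetric positive semidefinite with $\rho(F(R))<1$, where $F(R):=R(H^TH+R)^{-1}$ and $\rho$ denotes the spectral radius. Define the high-order regularization solution $$\hat\beta_{hr}=(H^TH+R)^{-1}\sum_{i=0}^{c}F(R)^i\,H^TY,$$ the optimal solution $\beta_{opt}=H^{\dagger}Y=(H^TH)^{-1}H^TY$, and the error $e_\beta=\hat\beta_{hr}-\beta_{opt}$. Then $$\lim_{R\to O}\|e_\beta\|=0\quad\text{and}\quad \lim_{R\to O}\left\|(H^TH+R)^{-1}F(R)H^TY\right\|=0,$$ where $O$ is the zero matrix and the limit is over symmetric positive semidefinite $R$, and, for fixed such $R$, $$\lim_{c\to+\infty}\|e_\beta\|=0.$$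
   Context: $\|\cdot\|$ denotes the 2-norm (spectral norm for matrices). $H^{\dagger}$ is the Moore–Penrose pseudo-inverse. $R$ is called the regularization matrix and $c$ the regularization order. *)

theory Defs
  imports "HOL-Analysis.Analysis"
begin

definition spec_norm :: "real^'n^'m \<Rightarrow> real" where
  "spec_norm A = onorm (\<lambda>x. A *v x)"

primrec mpow :: "real^'n^'n \<Rightarrow> nat \<Rightarrow> real^'n^'n" where
  "mpow A 0 = mat 1"
| "mpow A (Suc i) = A ** mpow A i"

definition cplx_mat :: "real^'n^'n \<Rightarrow> complex^'n^'n" where
  "cplx_mat A = (\<chi> i j. complex_of_real (A $ i $ j))"

definition is_eigenvalue :: "real^'n^'n \<Rightarrow> complex \<Rightarrow> bool" where
  "is_eigenvalue A l \<longleftrightarrow> (\<exists>v. v \<noteq> 0 \<and> cplx_mat A *v v = l *s v)"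

definition spectral_radius :: "real^'n^'n \<Rightarrow> real" where
  "spectral_radius A = Sup {cmod l | l. is_eigenvalue A l}"

definition pos_def :: "real^'n^'n \<Rightarrow> bool" where
  "pos_def A \<longleftrightarrow> transpose A = A \<and> (\<forall>x. x \<noteq> 0 \<longrightarrow> x \<bullet> (A *v x) > 0)"

definition psd :: "real^'n^'n \<Rightarrow> bool" where
  "psd A \<longleftrightarrow> transpose A = A \<and> (\<forall>x. x \<bullet> (A *v x) \<ge> 0)"

definition Fmat :: "real^'n^'N \<Rightarrow> real^'n^'n \<Rightarrow> real^'n^'n" where
  "Fmat H R = R ** matrix_inv (transpose H ** H + R)"

definition beta_hr :: "real^'n^'N \<Rightarrow> real^'k^'N \<Rightarrow> real^'n^'n \<Rightarrow> nat \<Rightarrow> real^'k^'n" where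
  "beta_hr H Y R c = matrix_inv (transpose H ** H + R) **
      (\<Sum>i\<in>{0..c}. mpow (Fmat H R) i) ** (transpose H ** Y)"

definition beta_opt :: "real^'n^'N \<Rightarrow> real^'k^'N \<Rightarrow> real^'k^'n" where
  "beta_opt H Y = matrix_inv (transpose H ** H) ** (transpose H ** Y)"

end

theory Submission
  imports Defs
begin

(* With M = H^T H + R and T = M^-1 R one has M^-1 = (I - T) (H^T H)^-1 and M^-1 F(R) = T M^-1,
   so the truncated series telescopes to the error identity e_beta = - T^(c+1) beta_opt.
   Coercivity x^T H^T H x >= mu |x|^2 gives |M^-1| <= 1/mu and |T| <= |R|/mu, whence both limits
   as R -> 0. For fixed psd R, y = T x solves M y = R x, which forces y^T M y <= x^T R x; so T is a
   strict contraction in the energy norm x^T M x, T^k -> 0, and the error vanishes as c -> oo. *)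

lemma norm_matrix_vector_le_spec_norm: "norm (X *v x) \<le> spec_norm X * norm x"
  unfolding spec_norm_def by (rule onorm[OF matrix_vector_mul_bounded_linear])

lemma spec_norm_nonneg: "0 \<le> spec_norm X"
  unfolding spec_norm_def by (rule onorm_pos_le[OF matrix_vector_mul_bounded_linear])

lemma spec_norm_le:
  assumes "\<And>x. norm (X *v x) \<le> b * norm x"
  shows "spec_norm X \<le> b"
  unfolding spec_norm_def using assms by (rule onorm_le)

lemma spec_norm_matrix_mult_le:
  "spec_norm ((X::real^'n^'m) ** (Y::real^'k^'n)) \<le> spec_norm X * spec_norm Y"
proof (rule spec_norm_le)
  fix x
  have "norm ((X ** Y) *v x) \<le> spec_norm X * norm (Y *v x)"
    by (simp add: norm_matrix_vector_le_spec_norm flip: matrix_vector_mul_assoc)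
  also have "\<dots> \<le> spec_norm X * (spec_norm Y * norm x)"
    by (intro mult_left_mono norm_matrix_vector_le_spec_norm spec_norm_nonneg)
  finally show "norm ((X ** Y) *v x) \<le> spec_norm X * spec_norm Y * norm x"
    by (simp add: mult.assoc)
qed

lemma spec_norm_uminus: "spec_norm (- X) = spec_norm X"
proof -
  have "(\<lambda>x. (- X) *v x) = (\<lambda>x. - (X *v x))"
    by (auto simp: vec_eq_iff matrix_vector_mult_def sum_negf)
  then show ?thesis
    unfolding spec_norm_def by (simp add: onorm_neg)
qed

lemma spec_norm_mpow_le: "spec_norm (mpow X k) \<le> spec_norm X ^ k"
proof (induction k)
  case 0
  show ?case by (simp add: spec_norm_le)
next
  case (Suc k)
  have "spec_norm (mpow X (Suc k)) \<le> spec_norm X * spec_norm (mpow X k)"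
    by (simp add: spec_norm_matrix_mult_le)
  also have "\<dots> \<le> spec_norm X * spec_norm X ^ k"
    using Suc.IH by (simp add: mult_left_mono spec_norm_nonneg)
  finally show ?case by simp
qed

lemma spec_norm_tendsto_zero: "(spec_norm \<longlongrightarrow> 0) (at (0::real^'n^'m) within S)"
proof (rule Lim_null_comparison)
  let ?g = "\<lambda>X::real^'n^'m. \<Sum>i\<in>UNIV. \<Sum>j\<in>UNIV. \<bar>X $ i $ j\<bar>"
  show "\<forall>\<^sub>F X in at 0 within S. norm (spec_norm X) \<le> ?g X"
    unfolding spec_norm_def
    by (intro always_eventually allI) (simp add: onorm_pos_le onorm_le_matrix_component_sum)
  have "(?g \<longlongrightarrow> ?g 0) (at 0 within S)"
    by (intro tendsto_intros)
  then show "(?g \<longlongrightarrow> 0) (at 0 within S)"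
    by simp
qed

lemma inner_matrix_vector_le_spec_norm: "x \<bullet> (M *v x) \<le> spec_norm M * (norm x)\<^sup>2"
proof -
  have "x \<bullet> (M *v x) \<le> norm x * norm (M *v x)"
    by (rule Cauchy_Schwarz_ineq2[THEN order_trans[OF abs_ge_self]])
  also have "\<dots> \<le> norm x * (spec_norm M * norm x)"
    by (simp add: mult_left_mono norm_matrix_vector_le_spec_norm)
  finally show ?thesis
    by (simp add: power2_eq_square mult_ac)
qed

lemma matrix_diff_ldistrib: "(C::'a::ring_1^'n^'m) ** (A - B) = C ** A - C ** B"
  by (simp add: matrix_matrix_mult_def vec_eq_iff sum_subtractf algebra_simps)

lemma matrix_diff_rdistrib: "((A::'a::ring_1^'n^'m) - B) ** C = A ** C - B ** C"
  by (simp add: matrix_matrix_mult_def vec_eq_iff sum_subtractf algebra_simps)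

lemma matrix_inv_left:
  assumes "invertible (X::'a::semiring_1^'n^'n)"
  shows "matrix_inv X ** X = mat 1"
  using assms unfolding invertible_def matrix_inv_def by (rule someI_ex[THEN conjunct2])

lemma matrix_inv_right:
  assumes "invertible (X::'a::semiring_1^'n^'n)"
  shows "X ** matrix_inv X = mat 1"
  using assms unfolding invertible_def matrix_inv_def by (rule someI_ex[THEN conjunct1])

lemma mpow_Suc_right: "mpow A (Suc k) = mpow A k ** A"
  by (induction k) (simp_all add: matrix_mul_assoc)

lemma mpow_intertwine:
  assumes "X ** P = Q ** X"
  shows "X ** mpow P k = mpow Q k ** X"
proof (induction k)
  case (Suc k)
  have "X ** mpow P (Suc k) = (X ** P) ** mpow P k"
    by (simp add: matrix_mul_assoc)
  also have "\<dots> = Q ** (X ** mpow P k)"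
    by (simp add: assms matrix_mul_assoc)
  finally show ?case
    by (simp add: Suc.IH matrix_mul_assoc)
qed simp

lemma pos_def_coercive:
  fixes A :: "real^'n^'n"
  assumes "pos_def A"
  obtains \<mu> where "\<mu> > 0" "\<And>x. \<mu> * (norm x)\<^sup>2 \<le> x \<bullet> (A *v x)"
proof -
  let ?q = "\<lambda>x. x \<bullet> (A *v x)"
  have "continuous_on (sphere 0 1) ?q"
    by (intro continuous_intros linear_continuous_on matrix_vector_mul_bounded_linear)
  then obtain x0 where x0: "x0 \<in> sphere 0 1" "\<And>y. y \<in> sphere 0 1 \<Longrightarrow> ?q x0 \<le> ?q y"
    using continuous_attains_inf[OF compact_sphere, of 0 1 ?q] by auto
  then have "?q x0 > 0"
    using assms unfolding pos_def_def by (metis mem_sphere_0 norm_zero zero_neq_one)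
  moreover have "?q x0 * (norm x)\<^sup>2 \<le> ?q x" for x
  proof (cases "x = 0")
    case False
    then have "?q x0 \<le> ?q ((1 / norm x) *\<^sub>R x)"
      by (intro x0(2)) simp
    also have "\<dots> = ?q x / (norm x)\<^sup>2"
      by (simp add: matrix_vector_mult_scaleR power2_eq_square)
    finally show ?thesis
      using False by (simp add: field_simps)
  qed simp
  ultimately show ?thesis
    using that by blast
qed

lemma invertible_add_psd:
  fixes A R :: "real^'n^'n"
  assumes "\<mu> > 0" "\<And>x. \<mu> * (norm x)\<^sup>2 \<le> x \<bullet> (A *v x)" and "psd R"
  shows "invertible (A + R)"
proof -
  have "x = 0" if "(A + R) *v x = 0" for x
  proof -
    have "\<mu> * (norm x)\<^sup>2 \<le> x \<bullet> (A *v x) + x \<bullet> (R *v x)"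
      using assms unfolding psd_def by (smt (verit))
    also have "\<dots> = x \<bullet> ((A + R) *v x)"
      by (simp add: matrix_vector_mult_add_rdistrib inner_add_right)
    also have "\<dots> = 0"
      using that by simp
    finally show "x = 0"
      using \<open>\<mu> > 0\<close> by (simp add: mult_le_0_iff)
  qed
  then show ?thesis
    using invertible_left_inverse matrix_left_invertible_ker by blast
qed

lemma spec_norm_inv_add_psd_le:
  fixes A R :: "real^'n^'n"
  assumes \<mu>: "\<mu> > 0" "\<And>x. \<mu> * (norm x)\<^sup>2 \<le> x \<bullet> (A *v x)" and R: "psd R"
  shows "spec_norm (matrix_inv (A + R)) \<le> 1 / \<mu>"
proof (rule spec_norm_le)
  fix y :: "real^'n"
  define x where "x = matrix_inv (A + R) *v y"
  have "(A + R) *v x = y"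
    using matrix_inv_right[OF invertible_add_psd[OF \<mu> R]]
    by (simp add: x_def matrix_vector_mul_assoc)
  then have "x \<bullet> y = x \<bullet> (A *v x) + x \<bullet> (R *v x)"
    by (metis inner_add_right matrix_vector_mult_add_rdistrib)
  then have "\<mu> * (norm x)\<^sup>2 \<le> x \<bullet> y"
    using \<mu>(2)[of x] R unfolding psd_def by (smt (verit))
  also have "\<dots> \<le> norm x * norm y"
    by (rule Cauchy_Schwarz_ineq2[THEN order_trans[OF abs_ge_self]])
  finally have "\<mu> * norm x \<le> norm y"
    by (cases "x = 0") (simp_all add: power2_eq_square)
  then show "norm (matrix_inv (A + R) *v y) \<le> 1 / \<mu> * norm y"
    using \<mu>(1) by (simp add: x_def field_simps)
qed

lemma spec_norm_regularized_le:
  fixes A R :: "real^'n^'n"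
  assumes "\<mu> > 0" "\<And>x. \<mu> * (norm x)\<^sup>2 \<le> x \<bullet> (A *v x)" and "psd R"
  shows "spec_norm (matrix_inv (A + R) ** R) \<le> spec_norm R / \<mu>"
proof -
  have "spec_norm (matrix_inv (A + R) ** R) \<le> spec_norm (matrix_inv (A + R)) * spec_norm R"
    by (rule spec_norm_matrix_mult_le)
  also have "\<dots> \<le> 1 / \<mu> * spec_norm R"
    by (intro mult_right_mono spec_norm_inv_add_psd_le assms spec_norm_nonneg)
  finally show ?thesis
    by simp
qed

lemma regularized_inverse_geometric_sum:
  fixes A R :: "real^'n^'n"
  assumes A: "invertible A" and M: "invertible (A + R)"
  defines "T \<equiv> matrix_inv (A + R) ** R"
  shows "matrix_inv (A + R) ** (\<Sum>i\<in>{0..c}. mpow (R ** matrix_inv (A + R)) i)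
       = (mat 1 - mpow T (Suc c)) ** matrix_inv A"
proof -
  let ?Mi = "matrix_inv (A + R)"
  have "?Mi ** A + T = mat 1"
    using matrix_inv_left[OF M] by (simp add: T_def flip: matrix_add_ldistrib)
  then have "?Mi ** A = mat 1 - T"
    by (simp add: algebra_simps)
  then have Mi: "?Mi = (mat 1 - T) ** matrix_inv A"
    by (metis A matrix_inv_right matrix_mul_assoc matrix_mul_rid)
  show ?thesis
  proof (induction c)
    case 0
    show ?case
      using Mi by simp
  next
    case (Suc c)
    have "?Mi ** (R ** ?Mi) = T ** ?Mi"
      by (simp add: T_def matrix_mul_assoc)
    then have "?Mi ** mpow (R ** ?Mi) (Suc c) = mpow T (Suc c) ** ?Mi"
      by (rule mpow_intertwine)
    also have "\<dots> = (mpow T (Suc c) ** (mat 1 - T)) ** matrix_inv A"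
      by (simp only: Mi matrix_mul_assoc)
    also have "mpow T (Suc c) ** (mat 1 - T) = mpow T (Suc c) - mpow T (Suc (Suc c))"
      by (simp only: matrix_diff_ldistrib matrix_mul_rid mpow_Suc_right[of T "Suc c"])
    finally show ?case
      using Suc.IH by (simp add: matrix_add_ldistrib matrix_diff_rdistrib)
  qed
qed

lemma beta_hr_error:
  fixes H :: "real^'n^'N" and Y :: "real^'k^'N"
  assumes "pos_def (transpose H ** H)" and "psd R"
  shows "beta_hr H Y R c - beta_opt H Y
       = - (mpow (matrix_inv (transpose H ** H + R) ** R) (Suc c) ** beta_opt H Y)"
proof -
  obtain \<mu> where \<mu>: "\<mu> > 0" "\<And>x. \<mu> * (norm x)\<^sup>2 \<le> x \<bullet> ((transpose H ** H) *v x)"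
    using pos_def_coercive[OF assms(1)] by blast
  have psd0: "psd (0::real^'n^'n)"
    unfolding psd_def by (simp add: transpose_def vec_eq_iff)
  have "invertible (transpose H ** H)"
    using invertible_add_psd[OF \<mu> psd0] by simp
  with invertible_add_psd[OF \<mu> assms(2)] show ?thesis
    unfolding beta_hr_def beta_opt_def Fmat_def
    by (simp add: regularized_inverse_geometric_sum matrix_diff_rdistrib matrix_mul_assoc)
qed

lemma psd_solution_energy_le:
  fixes A R :: "real^'n^'n"
  assumes A: "\<And>z. 0 \<le> z \<bullet> (A *v z)" and R: "psd R" and y: "(A + R) *v y = R *v x"
  shows "y \<bullet> ((A + R) *v y) \<le> x \<bullet> (R *v x)"
proof -
  have "x \<bullet> (R *v y) = (transpose R *v x) \<bullet> y"
    by (simp add: dot_lmul_matrix)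
  then have sym: "x \<bullet> (R *v y) = y \<bullet> (R *v x)"
    using R unfolding psd_def by (simp add: inner_commute)
  have "0 \<le> (x - y) \<bullet> (R *v (x - y))"
    using R unfolding psd_def by blast
  also have "\<dots> = x \<bullet> (R *v x) - 2 * (y \<bullet> (R *v x)) + y \<bullet> (R *v y)"
    using sym by (simp add: matrix_vector_mult_diff_distrib inner_diff_left inner_diff_right)
  also have "y \<bullet> (R *v x) = y \<bullet> ((A + R) *v y)"
    by (simp add: y)
  also have "y \<bullet> (R *v y) = y \<bullet> ((A + R) *v y) - y \<bullet> (A *v y)"
    by (simp add: matrix_vector_mult_add_rdistrib inner_add_right)
  finally show ?thesis
    using A[of y] by linarith
qed

lemma regularized_energy_contraction:
  fixes A R :: "real^'n^'n"
  assumes \<mu>: "\<mu> > 0" "\<And>x. \<mu> * (norm x)\<^sup>2 \<le> x \<bullet> (A *v x)" and R: "psd R"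
  defines "M \<equiv> A + R"
  defines "T \<equiv> matrix_inv M ** R"
  shows "(T *v x) \<bullet> (M *v (T *v x)) \<le> spec_norm M / (spec_norm M + \<mu>) * (x \<bullet> (M *v x))"
proof -
  let ?s = "spec_norm M"
  have "M *v (T *v x) = R *v x"
    using matrix_inv_right[OF invertible_add_psd[OF \<mu> R]]
    by (simp add: M_def T_def matrix_vector_mul_assoc matrix_mul_assoc)
  moreover have "0 \<le> z \<bullet> (A *v z)" for z
    using \<mu>(2)[of z] \<mu>(1) by (smt (verit) zero_le_power2 mult_nonneg_nonneg)
  ultimately have "(T *v x) \<bullet> (M *v (T *v x)) \<le> x \<bullet> (R *v x)"
    using psd_solution_energy_le R unfolding M_def by blast
  also have "x \<bullet> (R *v x) = x \<bullet> (M *v x) - x \<bullet> (A *v x)"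
    by (simp add: M_def matrix_vector_mult_add_rdistrib inner_add_right)
  also have "\<dots> \<le> x \<bullet> (M *v x) - \<mu> * (norm x)\<^sup>2"
    using \<mu>(2) by simp
  also have "\<dots> \<le> ?s / (?s + \<mu>) * (x \<bullet> (M *v x))"
  proof -
    have "x \<bullet> (M *v x) \<le> (?s + \<mu>) * (norm x)\<^sup>2"
      using inner_matrix_vector_le_spec_norm[of x M] \<mu>(1)
      by (simp add: distrib_right add_increasing2)
    then have "\<mu> * (x \<bullet> (M *v x)) \<le> \<mu> * ((?s + \<mu>) * (norm x)\<^sup>2)"
      using \<mu>(1) by (simp add: mult_left_mono)
    moreover have "?s + \<mu> > 0"
      using spec_norm_nonneg[of M] \<mu>(1) by linarith
    ultimately show ?thesis
      by (simp add: field_simps)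
  qed
  finally show ?thesis .
qed

lemma spec_norm_mpow_le_of_energy_contraction:
  fixes M T :: "real^'n^'n"
  assumes "\<mu> > 0" "0 \<le> q"
    and lower: "\<And>x. \<mu> * (norm x)\<^sup>2 \<le> x \<bullet> (M *v x)"
    and upper: "\<And>x. x \<bullet> (M *v x) \<le> L * (norm x)\<^sup>2"
    and contraction: "\<And>x. (T *v x) \<bullet> (M *v (T *v x)) \<le> q * (x \<bullet> (M *v x))"
  shows "spec_norm (mpow T k) \<le> sqrt (L / \<mu>) * sqrt q ^ k"
proof (rule spec_norm_le)
  fix x :: "real^'n"
  have iterate: "(mpow T j *v x) \<bullet> (M *v (mpow T j *v x)) \<le> q ^ j * (x \<bullet> (M *v x))" for j
  proof (induction j)
    case (Suc j)
    have "(mpow T (Suc j) *v x) \<bullet> (M *v (mpow T (Suc j) *v x))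
        \<le> q * ((mpow T j *v x) \<bullet> (M *v (mpow T j *v x)))"
      using contraction by (simp flip: matrix_vector_mul_assoc)
    also have "\<dots> \<le> q * (q ^ j * (x \<bullet> (M *v x)))"
      using Suc.IH \<open>0 \<le> q\<close> by (rule mult_left_mono)
    finally show ?case
      by (simp add: mult.assoc)
  qed simp
  let ?y = "mpow T k *v x"
  have "\<mu> * (norm ?y)\<^sup>2 \<le> q ^ k * (L * (norm x)\<^sup>2)"
    using lower[of ?y] iterate[of k] mult_left_mono[OF upper[of x], of "q ^ k"] \<open>0 \<le> q\<close>
    by simp
  then have "(norm ?y)\<^sup>2 \<le> L / \<mu> * q ^ k * (norm x)\<^sup>2"
    using \<open>\<mu> > 0\<close> by (simp add: field_simps)
  then have "norm ?y \<le> sqrt (L / \<mu> * q ^ k * (norm x)\<^sup>2)"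
    by (rule real_le_rsqrt)
  also have "\<dots> = sqrt (L / \<mu>) * sqrt q ^ k * norm x"
    by (simp only: real_sqrt_mult real_sqrt_power[of q k] real_sqrt_abs abs_norm_cancel)
  finally show "norm ?y \<le> sqrt (L / \<mu>) * sqrt q ^ k * norm x" .
qed

lemma tendsto_spec_norm_mpow_regularized:
  fixes A R :: "real^'n^'n"
  assumes \<mu>: "\<mu> > 0" "\<And>x. \<mu> * (norm x)\<^sup>2 \<le> x \<bullet> (A *v x)" and R: "psd R"
  shows "(\<lambda>k. spec_norm (mpow (matrix_inv (A + R) ** R) k)) \<longlonglongrightarrow> 0"
proof (rule Lim_null_comparison)
  let ?s = "spec_norm (A + R)"
  let ?q = "?s / (?s + \<mu>)"
  have q: "0 \<le> ?q" "?q < 1"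
    using spec_norm_nonneg[of "A + R"] \<mu>(1) by (simp_all add: field_simps)
  have "\<mu> * (norm x)\<^sup>2 \<le> x \<bullet> ((A + R) *v x)" for x
    using \<mu>(2)[of x] R unfolding psd_def
    by (smt (verit) inner_add_right matrix_vector_mult_add_rdistrib)
  then show "\<forall>\<^sub>F k in sequentially.
      norm (spec_norm (mpow (matrix_inv (A + R) ** R) k)) \<le> sqrt (?s / \<mu>) * sqrt ?q ^ k"
    using spec_norm_mpow_le_of_energy_contraction[OF \<mu>(1) q(1) _ inner_matrix_vector_le_spec_norm
        regularized_energy_contraction[OF \<mu> R]]
    by (simp add: spec_norm_nonneg)
  show "(\<lambda>k. sqrt (?s / \<mu>) * sqrt ?q ^ k) \<longlonglongrightarrow> 0"
    using q by (intro tendsto_mult_right_zero LIMSEQ_power_zero) simp_all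
qed

lemma tendsto_zero_within_psd:
  fixes f :: "real^'n^'n \<Rightarrow> real"
  assumes "\<And>R. psd R \<Longrightarrow> \<bar>f R\<bar> \<le> g (spec_norm R)" and "isCont g 0" and "g 0 = 0"
  shows "(f \<longlongrightarrow> 0) (at 0 within {R. psd R})"
proof (rule Lim_null_comparison)
  show "\<forall>\<^sub>F R in at 0 within {R. psd R}. norm (f R) \<le> g (spec_norm R)"
    using assms(1) by (simp add: eventually_at_filter)
  show "((\<lambda>R. g (spec_norm R)) \<longlongrightarrow> 0) (at 0 within {R. psd R})"
    using isCont_tendsto_compose[OF assms(2) spec_norm_tendsto_zero] assms(3) by simp
qed

lemma beta_hr_error_tendsto_zero_at_regularization_zero:
  fixes H :: "real^'n^'N" and Y :: "real^'k^'N"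
  assumes "pos_def (transpose H ** H)"
  shows "((\<lambda>R. spec_norm (beta_hr H Y R c - beta_opt H Y)) \<longlongrightarrow> 0) (at 0 within {R. psd R})"
proof -
  obtain \<mu> where \<mu>: "\<mu> > 0" "\<And>x. \<mu> * (norm x)\<^sup>2 \<le> x \<bullet> ((transpose H ** H) *v x)"
    using pos_def_coercive[OF assms] by blast
  show ?thesis
  proof (rule tendsto_zero_within_psd[where g = "\<lambda>t. (t / \<mu>) ^ Suc c * spec_norm (beta_opt H Y)"])
    fix R :: "real^'n^'n"
    let ?T = "matrix_inv (transpose H ** H + R) ** R"
    assume R: "psd R"
    have "spec_norm (beta_hr H Y R c - beta_opt H Y)
        \<le> spec_norm (mpow ?T (Suc c)) * spec_norm (beta_opt H Y)"
      unfolding beta_hr_error[OF assms R] spec_norm_uminus by (rule spec_norm_matrix_mult_le)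
    also have "\<dots> \<le> (spec_norm R / \<mu>) ^ Suc c * spec_norm (beta_opt H Y)"
      using spec_norm_mpow_le[of ?T] power_mono[OF spec_norm_regularized_le[OF \<mu> R] spec_norm_nonneg]
      by (intro mult_right_mono spec_norm_nonneg) (rule order_trans)
    finally show "\<bar>spec_norm (beta_hr H Y R c - beta_opt H Y)\<bar>
        \<le> (spec_norm R / \<mu>) ^ Suc c * spec_norm (beta_opt H Y)"
      by (simp add: spec_norm_nonneg)
  qed (use \<mu>(1) in \<open>auto intro!: continuous_intros\<close>)
qed

lemma regularized_correction_tendsto_zero:
  fixes H :: "real^'n^'N" and Y :: "real^'k^'N"
  assumes "pos_def (transpose H ** H)"
  shows "((\<lambda>R. spec_norm (matrix_inv (transpose H ** H + R) ** Fmat H R ** (transpose H ** Y)))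
            \<longlongrightarrow> 0) (at 0 within {R. psd R})"
proof -
  let ?Mi = "\<lambda>R. matrix_inv (transpose H ** H + R)"
  let ?B = "transpose H ** Y"
  obtain \<mu> where \<mu>: "\<mu> > 0" "\<And>x. \<mu> * (norm x)\<^sup>2 \<le> x \<bullet> ((transpose H ** H) *v x)"
    using pos_def_coercive[OF assms] by blast
  show ?thesis
  proof (rule tendsto_zero_within_psd[where g = "\<lambda>t. t / \<mu> * (1 / \<mu>) * spec_norm ?B"])
    fix R :: "real^'n^'n"
    assume R: "psd R"
    have "?Mi R ** Fmat H R ** ?B = (?Mi R ** R) ** ?Mi R ** ?B"
      by (simp add: Fmat_def matrix_mul_assoc)
    also have "spec_norm \<dots> \<le> spec_norm (?Mi R ** R) * spec_norm (?Mi R) * spec_norm ?B"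
      by (intro order_trans[OF spec_norm_matrix_mult_le] mult_right_mono spec_norm_matrix_mult_le
          spec_norm_nonneg)
    also have "\<dots> \<le> spec_norm R / \<mu> * (1 / \<mu>) * spec_norm ?B"
      by (intro mult_right_mono mult_mono spec_norm_regularized_le[OF \<mu> R]
          spec_norm_inv_add_psd_le[OF \<mu> R] spec_norm_nonneg divide_nonneg_pos \<mu>(1))
    finally show "\<bar>spec_norm (?Mi R ** Fmat H R ** ?B)\<bar> \<le> spec_norm R / \<mu> * (1 / \<mu>) * spec_norm ?B"
      by (simp add: spec_norm_nonneg)
  qed (use \<mu>(1) in \<open>auto intro!: continuous_intros\<close>)
qed

lemma beta_hr_error_tendsto_zero_at_order_infinity:
  fixes H :: "real^'n^'N" and Y :: "real^'k^'N"
  assumes "pos_def (transpose H ** H)" and R: "psd R"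
  shows "(\<lambda>c. spec_norm (beta_hr H Y R c - beta_opt H Y)) \<longlonglongrightarrow> 0"
proof (rule Lim_null_comparison)
  let ?T = "matrix_inv (transpose H ** H + R) ** R"
  obtain \<mu> where \<mu>: "\<mu> > 0" "\<And>x. \<mu> * (norm x)\<^sup>2 \<le> x \<bullet> ((transpose H ** H) *v x)"
    using pos_def_coercive[OF assms(1)] by blast
  have "spec_norm (beta_hr H Y R c - beta_opt H Y)
      \<le> spec_norm (mpow ?T (Suc c)) * spec_norm (beta_opt H Y)" for c
    unfolding beta_hr_error[OF assms] spec_norm_uminus by (rule spec_norm_matrix_mult_le)
  then show "\<forall>\<^sub>F c in sequentially. norm (spec_norm (beta_hr H Y R c - beta_opt H Y))
      \<le> spec_norm (mpow ?T (Suc c)) * spec_norm (beta_opt H Y)"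
    by (simp add: spec_norm_nonneg)
  show "(\<lambda>c. spec_norm (mpow ?T (Suc c)) * spec_norm (beta_opt H Y)) \<longlonglongrightarrow> 0"
    by (intro tendsto_mult_left_zero LIMSEQ_Suc tendsto_spec_norm_mpow_regularized[OF \<mu> R])
qed

theorem theorem1:
  fixes H :: "real^'n^'N" and Y :: "real^'k^'N"
  assumes "pos_def (transpose H ** H)"
  shows "(\<forall>c::nat. ((\<lambda>R. spec_norm (beta_hr H Y R c - beta_opt H Y)) \<longlongrightarrow> 0)
            (at 0 within {R. psd R}))
       \<and> ((\<lambda>R. spec_norm (matrix_inv (transpose H ** H + R) ** Fmat H R ** (transpose H ** Y)))
            \<longlongrightarrow> 0) (at 0 within {R. psd R})
       \<and> (\<forall>R. psd R \<and> spectral_radius (Fmat H R) < 1 \<longrightarrow>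
            (\<lambda>c. spec_norm (beta_hr H Y R c - beta_opt H Y)) \<longlonglongrightarrow> 0)"
  using beta_hr_error_tendsto_zero_at_regularization_zero[OF assms]
    regularized_correction_tendsto_zero[OF assms]
    beta_hr_error_tendsto_zero_at_order_infinity[OF assms]
  by blast

end
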